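(* Let $h,n\geq 2$ and let $V<S_h$ be a proper subgroup such that there exists a preference profile $p\in\mathcal{P}$ with $\mathrm{Stab}_{S_h\times\{id\}}(p)\leq V\times\{id\}$. Then $V\times\{id\}$ is an anonymity group with respect to $(h,n)$.
   Context: Permutations compose as $(\sigma\tau)(x)=\sigma(\tau(x))$. Let $H=[h]$, $G=S_h\times S_n$, and $\mathcal{P}=(S_n)^h$ (preference profiles, linear orders on $[n]$ being identified with elements of $S_n$). $G$ acts on $\mathcal{P}$ by $(p^{(\varphi,\psi)})_i=\psi\,p_{\varphi^{-1}(i)}$; for $U\leq G$, $\mathrm{Stab}_U(p)=\{g\in U:p^g=p\}$. A social preference function (SPF) is any function $F:\mathcal{P}\to S_n$. Its symmetry group is $G(F)=\{(\varphi,\psi)\in G: F(p^{(\varphi,\psi)})=\psi F(p)\ \forall p\}$ and its anonymity group is $G_1(F)=G(F)\cap(S_h\times\{id\})$. A subgroup $U\leq S_h\times\{id\}$ is an anonymity group with respect to $(h,n)$ if $U=G_1(F)$ for some SPF $F$. *)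

theory Defs
  imports "HOL-Algebra.Sym_Groups"
begin

text \<open>Permutations of [m] = {1..m} are functions nat => nat with p permutes {1..m}
  (carrier of sym_group m). A preference profile is a function from voters [h]
  to S_n, extended by id outside [h].\<close>

type_synonym profile = "nat \<Rightarrow> (nat \<Rightarrow> nat)"

definition profiles :: "nat \<Rightarrow> nat \<Rightarrow> profile set" where
  "profiles h n = {p. (\<forall>i\<in>{1..h}. p i permutes {1..n}) \<and> (\<forall>i. i \<notin> {1..h} \<longrightarrow> p i = id)}"

definition act :: "nat \<Rightarrow> (nat \<Rightarrow> nat) \<Rightarrow> (nat \<Rightarrow> nat) \<Rightarrow> profile \<Rightarrow> profile" where
  "act h \<phi> \<psi> p = (\<lambda>i. if i \<in> {1..h} then \<psi> \<circ> p (Hilbert_Choice.inv \<phi> i) else id)"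

definition Stab :: "nat \<Rightarrow> ((nat \<Rightarrow> nat) \<times> (nat \<Rightarrow> nat)) set \<Rightarrow> profile \<Rightarrow> ((nat \<Rightarrow> nat) \<times> (nat \<Rightarrow> nat)) set" where
  "Stab h U p = {g \<in> U. act h (fst g) (snd g) p = p}"

text \<open>An SPF is a map from profiles to S_n (values outside profiles are irrelevant).\<close>
definition is_SPF :: "nat \<Rightarrow> nat \<Rightarrow> (profile \<Rightarrow> (nat \<Rightarrow> nat)) \<Rightarrow> bool" where
  "is_SPF h n F \<longleftrightarrow> (\<forall>p\<in>profiles h n. F p permutes {1..n})"

definition symmetry_group :: "nat \<Rightarrow> nat \<Rightarrow> (profile \<Rightarrow> (nat \<Rightarrow> nat)) \<Rightarrow> ((nat \<Rightarrow> nat) \<times> (nat \<Rightarrow> nat)) set" where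
  "symmetry_group h n F = {(\<phi>, \<psi>). \<phi> \<in> carrier (sym_group h) \<and> \<psi> \<in> carrier (sym_group n) \<and>
      (\<forall>p\<in>profiles h n. F (act h \<phi> \<psi> p) = \<psi> \<circ> F p)}"

definition anonymity_group_of :: "nat \<Rightarrow> nat \<Rightarrow> (profile \<Rightarrow> (nat \<Rightarrow> nat)) \<Rightarrow> ((nat \<Rightarrow> nat) \<times> (nat \<Rightarrow> nat)) set" where
  "anonymity_group_of h n F = symmetry_group h n F \<inter> (carrier (sym_group h) \<times> {id})"

definition is_anonymity_group :: "nat \<Rightarrow> nat \<Rightarrow> ((nat \<Rightarrow> nat) \<times> (nat \<Rightarrow> nat)) set \<Rightarrow> bool" where
  "is_anonymity_group h n U \<longleftrightarrow>
      (\<exists>F. is_SPF h n F \<and> U = anonymity_group_of h n F)"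

end

theory Submission
  imports Defs
begin

text \<open>Fix a profile \<open>p\<^sub>0\<close> whose voter stabiliser lies in \<open>V \<times> {id}\<close>, and let \<open>F\<close> output a
  transposition on the \<open>V\<close>-orbit of \<open>p\<^sub>0\<close> and the identity elsewhere. A voter permutation
  \<open>\<phi>\<close> is an anonymity of such an indicator SPF iff it maps the orbit onto itself. Every element
  of \<open>V\<close> does; conversely, if \<open>\<phi> p\<^sub>0 = \<sigma> p\<^sub>0\<close> with \<open>\<sigma> \<in> V\<close>, then \<open>\<sigma>\<inverse>\<phi>\<close> stabilises \<open>p\<^sub>0\<close>,
  hence lies in \<open>V\<close>, and so does \<open>\<phi>\<close>.\<close>

lemma subgroup_sym_groupD:
  assumes "subgroup V (sym_group h)"
  shows subgroup_sym_group_id: "id \<in> V"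
    and subgroup_sym_group_permutes: "\<sigma> \<in> V \<Longrightarrow> \<sigma> permutes {1..h}"
    and subgroup_sym_group_comp: "\<sigma> \<in> V \<Longrightarrow> \<tau> \<in> V \<Longrightarrow> \<sigma> \<circ> \<tau> \<in> V"
    and subgroup_sym_group_inv: "\<sigma> \<in> V \<Longrightarrow> inv' \<sigma> \<in> V"
proof -
  interpret subgroup V "sym_group h" by (fact assms)
  show "id \<in> V" using one_closed by (simp add: sym_group_one)
  show "\<sigma> \<in> V \<Longrightarrow> \<sigma> permutes {1..h}" for \<sigma>
    using subset by (auto simp: sym_group_carrier)
  show "\<sigma> \<in> V \<Longrightarrow> \<tau> \<in> V \<Longrightarrow> \<sigma> \<circ> \<tau> \<in> V" for \<sigma> \<tau>
    using m_closed by (simp add: sym_group_mult)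
  show "\<sigma> \<in> V \<Longrightarrow> inv' \<sigma> \<in> V" for \<sigma>
    using m_inv_closed subset by auto
qed

lemma act_id_id:
  assumes "p \<in> profiles h n"
  shows "act h id id p = p"
  using assms unfolding act_def profiles_def by (auto simp: inv_id)

lemma act_comp:
  assumes "\<phi> permutes {1..h}" "\<sigma> permutes {1..h}"
  shows "act h \<phi> id (act h \<sigma> id p) = act h (\<phi> \<circ> \<sigma>) id p"
proof -
  have "inv' (\<phi> \<circ> \<sigma>) = inv' \<sigma> \<circ> inv' \<phi>"
    using assms by (simp add: o_inv_distrib permutes_bij)
  moreover have "inv' \<phi> i \<in> {1..h}" if "i \<in> {1..h}" for i
    using assms(1) that by (metis permutes_in_image permutes_inv)
  ultimately show ?thesis unfolding act_def by auto
qed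

lemma act_inv_act:
  assumes "\<phi> permutes {1..h}" "p \<in> profiles h n"
  shows "act h (inv' \<phi>) id (act h \<phi> id p) = p"
  using assms by (simp add: act_comp permutes_inv permutes_inv_o act_id_id)

lemma anonymity_group_of_indicator:
  assumes "\<tau> \<noteq> id"
  shows "anonymity_group_of h n (\<lambda>q. if q \<in> A then \<tau> else id) =
    {\<phi>. \<phi> permutes {1..h} \<and> (\<forall>p\<in>profiles h n. act h \<phi> id p \<in> A \<longleftrightarrow> p \<in> A)} \<times> {id}"
  using assms permutes_id
  unfolding anonymity_group_of_def symmetry_group_def by (auto simp: sym_group_carrier)

definition voter_orbit :: "nat \<Rightarrow> (nat \<Rightarrow> nat) set \<Rightarrow> profile \<Rightarrow> profile set" where
  "voter_orbit h V p = (\<lambda>\<sigma>. act h \<sigma> id p) ` V"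

lemma act_mem_voter_orbit_iff:
  assumes V: "subgroup V (sym_group h)" and \<phi>: "\<phi> \<in> V" and q: "q \<in> profiles h n"
  shows "act h \<phi> id q \<in> voter_orbit h V p \<longleftrightarrow> q \<in> voter_orbit h V p"
proof
  assume "q \<in> voter_orbit h V p"
  then obtain \<sigma> where \<sigma>: "\<sigma> \<in> V" "q = act h \<sigma> id p" unfolding voter_orbit_def by blast
  then have "act h \<phi> id q = act h (\<phi> \<circ> \<sigma>) id p"
    using act_comp subgroup_sym_group_permutes[OF V] \<phi> by blast
  then show "act h \<phi> id q \<in> voter_orbit h V p"
    using subgroup_sym_group_comp[OF V \<phi> \<sigma>(1)] unfolding voter_orbit_def by blast
next
  assume "act h \<phi> id q \<in> voter_orbit h V p"
  then obtain \<sigma> where \<sigma>: "\<sigma> \<in> V" "act h \<phi> id q = act h \<sigma> id p" unfolding voter_orbit_def by blast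
  have \<phi>_perm: "\<phi> permutes {1..h}" using V \<phi> by (rule subgroup_sym_group_permutes)
  have "q = act h (inv' \<phi>) id (act h \<sigma> id p)"
    using act_inv_act[OF \<phi>_perm q] \<sigma>(2) by simp
  also have "\<dots> = act h (inv' \<phi> \<circ> \<sigma>) id p"
    using act_comp permutes_inv[OF \<phi>_perm] subgroup_sym_group_permutes[OF V \<sigma>(1)] by blast
  finally show "q \<in> voter_orbit h V p"
    using subgroup_sym_groupD[OF V] \<phi> \<sigma>(1) unfolding voter_orbit_def by blast
qed

lemma act_mem_voter_orbit_imp_mem:
  assumes V: "subgroup V (sym_group h)" and p: "p \<in> profiles h n"
    and stab: "Stab h (carrier (sym_group h) \<times> {id}) p \<subseteq> V \<times> {id}"
    and \<phi>: "\<phi> permutes {1..h}" and orbit: "act h \<phi> id p \<in> voter_orbit h V p"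
  shows "\<phi> \<in> V"
proof -
  obtain \<sigma> where \<sigma>: "\<sigma> \<in> V" "act h \<phi> id p = act h \<sigma> id p"
    using orbit unfolding voter_orbit_def by blast
  have \<sigma>_perm: "\<sigma> permutes {1..h}" using V \<sigma>(1) by (rule subgroup_sym_group_permutes)
  have "act h (inv' \<sigma> \<circ> \<phi>) id p = act h (inv' \<sigma>) id (act h \<phi> id p)"
    using act_comp[OF permutes_inv[OF \<sigma>_perm] \<phi>] by simp
  also have "\<dots> = act h (inv' \<sigma>) id (act h \<sigma> id p)" using \<sigma>(2) by simp
  also have "\<dots> = p" using \<sigma>_perm p by (rule act_inv_act)
  finally have "(inv' \<sigma> \<circ> \<phi>, id) \<in> Stab h (carrier (sym_group h) \<times> {id}) p"
    unfolding Stab_def using \<phi> \<sigma>_perm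
    by (simp add: sym_group_carrier permutes_compose permutes_inv)
  then have "inv' \<sigma> \<circ> \<phi> \<in> V" using stab by blast
  then have "\<sigma> \<circ> (inv' \<sigma> \<circ> \<phi>) \<in> V" using V \<sigma>(1) by (simp add: subgroup_sym_group_comp)
  then show "\<phi> \<in> V" using \<sigma>_perm by (simp add: o_assoc permutes_inv_o)
qed

lemma voter_orbit_set_stabiliser:
  assumes V: "subgroup V (sym_group h)" and p: "p \<in> profiles h n"
    and stab: "Stab h (carrier (sym_group h) \<times> {id}) p \<subseteq> V \<times> {id}"
  shows "{\<phi>. \<phi> permutes {1..h} \<and>
      (\<forall>q\<in>profiles h n. act h \<phi> id q \<in> voter_orbit h V p \<longleftrightarrow> q \<in> voter_orbit h V p)} = V"
proof -
  have "p \<in> voter_orbit h V p"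
    unfolding voter_orbit_def using act_id_id[OF p, symmetric] subgroup_sym_group_id[OF V] by (rule image_eqI)
  show ?thesis
  proof (intro equalityI subsetI)
    fix \<phi> assume "\<phi> \<in> {\<phi>. \<phi> permutes {1..h} \<and>
      (\<forall>q\<in>profiles h n. act h \<phi> id q \<in> voter_orbit h V p \<longleftrightarrow> q \<in> voter_orbit h V p)}"
    then have "\<phi> permutes {1..h}" "act h \<phi> id p \<in> voter_orbit h V p"
      using \<open>p \<in> voter_orbit h V p\<close> p by auto
    then show "\<phi> \<in> V" by (rule act_mem_voter_orbit_imp_mem[OF V p stab])
  next
    fix \<phi> assume "\<phi> \<in> V"
    then show "\<phi> \<in> {\<phi>. \<phi> permutes {1..h} \<and>
      (\<forall>q\<in>profiles h n. act h \<phi> id q \<in> voter_orbit h V p \<longleftrightarrow> q \<in> voter_orbit h V p)}"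
      using act_mem_voter_orbit_iff[OF V] subgroup_sym_group_permutes[OF V] by blast
  qed
qed

theorem mainTheorem2:
  fixes h n :: nat and V :: "(nat \<Rightarrow> nat) set"
  assumes "h \<ge> 2" and "n \<ge> 2"
    and "subgroup V (sym_group h)"
    and "V \<noteq> carrier (sym_group h)"
    and "\<exists>p\<in>profiles h n. Stab h (carrier (sym_group h) \<times> {id}) p \<subseteq> V \<times> {id}"
  shows "is_anonymity_group h n (V \<times> {id})"
proof -
  obtain p where p: "p \<in> profiles h n"
    and stab: "Stab h (carrier (sym_group h) \<times> {id}) p \<subseteq> V \<times> {id}"
    using assms(5) by blast
  define \<tau> :: "nat \<Rightarrow> nat" where "\<tau> = Transposition.transpose 1 2"
  have \<tau>_perm: "\<tau> permutes {1..n}"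
    unfolding \<tau>_def using assms(2) by (intro permutes_swap_id) auto
  have "\<tau> 1 \<noteq> id 1" by (simp add: \<tau>_def)
  then have "\<tau> \<noteq> id" by force
  define F where "F = (\<lambda>q. if q \<in> voter_orbit h V p then \<tau> else id)"
  have "is_SPF h n F" unfolding is_SPF_def F_def using \<tau>_perm permutes_id by auto
  moreover have "anonymity_group_of h n F = V \<times> {id}"
    unfolding F_def anonymity_group_of_indicator[OF \<open>\<tau> \<noteq> id\<close>]
    using voter_orbit_set_stabiliser[OF assms(3) p stab] by simp
  ultimately show ?thesis unfolding is_anonymity_group_def by blast
qed

end
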